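(* Let $\beta\ge 4$ be a constant, let $n$ be sufficiently large, and let $\alpha=\beta/\log n$. Throw $n$ balls independently and uniformly at random into $m=\alpha n=\beta n/\log n$ bins, and let $X_1$ be the number of bins containing exactly one ball. Then $X_1\ge n^{1-1/\beta}/(4\log n)$ with high probability, i.e., with probability at least $1-n^{-c}$ for an arbitrary fixed constant $c$ (for $n$ sufficiently large).
   Context: All logarithms are natural. The number of bins $m=\beta n/\log n$ is assumed to be an integer. *)

theory Defs
  imports "HOL-Probability.Probability"
begin

definition balls_into_bins :: "nat \<Rightarrow> nat \<Rightarrow> (nat \<Rightarrow> nat) pmf" where
  "balls_into_bins n m = pmf_of_set ({..<n} \<rightarrow>\<^sub>E {..<m})"

definition singleton_bins :: "nat \<Rightarrow> nat \<Rightarrow> (nat \<Rightarrow> nat) \<Rightarrow> nat" where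
  "singleton_bins n m f = card {j \<in> {..<m}. card {i \<in> {..<n}. f i = j} = 1}"

end

theory Submission
  imports Defs "HOL-Real_Asymp.Real_Asymp"
begin

text \<open>Moving a single ball changes the number of singleton bins by at most 2, so a
  bounded-differences (McDiarmid-type) inequality applies: the number of singleton bins falls
  more than \<open>t\<close> below its mean with probability at most \<open>exp (- t\<^sup>2 / (16 n))\<close>. That
  inequality is proved by the Chernoff method, bounding the exponential moment by induction
  over the balls, averaging out the last one in each step. The mean is
  \<open>n (1 - 1 / m) ^ (n - 1) \<ge> n exp (- n / (m - 1))\<close>, which for \<open>m = \<beta> n / ln n\<close> is at least
  \<open>n powr (1 - 1 / \<beta>) / 2\<close>. Taking \<open>t = n powr (1 - 1 / \<beta>) / 4\<close> gives failure probability
  \<open>exp (- n powr (1 - 2 / \<beta>) / 256)\<close>, which is eventually at most \<open>n powr - c\<close> because \<open>\<beta> \<ge> 4\<close>.\<close>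

lemma exp_le_one_plus_x_plus_sq:
  fixes x :: real
  assumes "\<bar>x\<bar> \<le> 1"
  shows "exp x \<le> 1 + x + x\<^sup>2"
proof (cases "x \<ge> 0")
  case True
  then show ?thesis using exp_bound[of x] assms by auto
next
  case False
  have "exp x \<le> 1 / (1 - x)"
    using exp_ge_add_one_self[of "-x"] False by (simp add: exp_minus field_simps)
  also have "\<dots> \<le> 1 + x + x\<^sup>2"
  proof -
    have "(1 - x) * (1 + x + x\<^sup>2) = 1 - x ^ 3"
      by (simp add: algebra_simps power2_eq_square power3_eq_cube)
    moreover have "x ^ 3 \<le> 0"
      using False by (simp add: power_le_zero_eq)
    ultimately have "1 \<le> (1 - x) * (1 + x + x\<^sup>2)"
      by simp
    then show ?thesis using False by (simp add: field_simps)
  qed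
  finally show ?thesis .
qed

lemma sum_exp_centred_le:
  fixes y :: "'a \<Rightarrow> real"
  assumes "finite M" "sum y M = 0" "\<And>a. a \<in> M \<Longrightarrow> \<bar>y a\<bar> \<le> d" "0 \<le> l" "l * d \<le> 1"
  shows "(\<Sum>a\<in>M. exp (l * y a)) \<le> card M * exp (l\<^sup>2 * d\<^sup>2)"
proof -
  have "exp (l * y a) \<le> 1 + l * y a + l\<^sup>2 * d\<^sup>2" if "a \<in> M" for a
  proof -
    have "\<bar>l * y a\<bar> \<le> l * d"
      using assms(3)[OF that] assms(4) by (simp add: abs_mult mult_left_mono)
    moreover from this have "(l * y a)\<^sup>2 \<le> (l * d)\<^sup>2"
      by (metis abs_ge_zero abs_le_square_iff abs_of_nonneg order.trans)
    ultimately show ?thesis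
      using exp_le_one_plus_x_plus_sq[of "l * y a"] assms(5) by (simp add: power_mult_distrib)
  qed
  then have "(\<Sum>a\<in>M. exp (l * y a)) \<le> (\<Sum>a\<in>M. 1 + l * y a + l\<^sup>2 * d\<^sup>2)"
    by (rule sum_mono)
  also have "\<dots> = card M * (1 + l\<^sup>2 * d\<^sup>2)"
    using assms(2) by (simp add: sum.distrib sum_distrib_left[symmetric] algebra_simps)
  also have "\<dots> \<le> card M * exp (l\<^sup>2 * d\<^sup>2)"
    using exp_ge_add_one_self[of "l\<^sup>2 * d\<^sup>2"] by (intro mult_left_mono) auto
  finally show ?thesis .
qed

lemma sum_PiE_lessThan_Suc:
  assumes "finite M"
  shows "(\<Sum>x\<in>{..<Suc n} \<rightarrow>\<^sub>E M. h x) = (\<Sum>x\<in>{..<n} \<rightarrow>\<^sub>E M. \<Sum>a\<in>M. h (x(n := a)))"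
proof -
  have "inj_on (\<lambda>(a, x). x(n := a)) (M \<times> ({..<n} \<rightarrow>\<^sub>E M))"
    using inj_combinator[of n "{..<n}" "\<lambda>_. M"] by simp
  then have "(\<Sum>x\<in>{..<Suc n} \<rightarrow>\<^sub>E M. h x) = (\<Sum>(a, x)\<in>M \<times> ({..<n} \<rightarrow>\<^sub>E M). h (x(n := a)))"
    unfolding lessThan_Suc PiE_insert_eq by (simp add: sum.reindex case_prod_unfold)
  also have "\<dots> = (\<Sum>x\<in>{..<n} \<rightarrow>\<^sub>E M. \<Sum>a\<in>M. h (x(n := a)))"
    by (simp add: sum.cartesian_product[symmetric] sum.swap[of _ M])
  finally show ?thesis .
qed

lemma abs_average_diff_le:
  fixes u :: "'a \<Rightarrow> real"
  assumes "finite M" "M \<noteq> {}" "\<And>b. b \<in> M \<Longrightarrow> \<bar>u b - v\<bar> \<le> d"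
  shows "\<bar>(\<Sum>b\<in>M. u b) / card M - v\<bar> \<le> d"
proof -
  have M: "real (card M) > 0" using assms(1,2) by (simp add: card_gt_0_iff)
  have "\<bar>(\<Sum>b\<in>M. u b) / card M - v\<bar> = \<bar>\<Sum>b\<in>M. u b - v\<bar> / card M"
    using M by (simp add: sum_subtractf field_simps)
  also have "\<dots> \<le> (\<Sum>b\<in>M. d) / card M"
    using M order.trans[OF sum_abs sum_mono[OF assms(3)]] by (intro divide_right_mono) auto
  also have "\<dots> = d" using M by simp
  finally show ?thesis .
qed

definition bounded_differences :: "nat \<Rightarrow> 'a set \<Rightarrow> real \<Rightarrow> ((nat \<Rightarrow> 'a) \<Rightarrow> real) \<Rightarrow> bool" where
  "bounded_differences n M d f \<longleftrightarrow>
     (\<forall>x\<in>{..<n} \<rightarrow>\<^sub>E M. \<forall>i<n. \<forall>a\<in>M. \<bar>f x - f (x(i := a))\<bar> \<le> d)"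

definition average_coord :: "nat \<Rightarrow> 'a set \<Rightarrow> ((nat \<Rightarrow> 'a) \<Rightarrow> real) \<Rightarrow> (nat \<Rightarrow> 'a) \<Rightarrow> real" where
  "average_coord i M f x = (\<Sum>a\<in>M. f (x(i := a))) / card M"

lemma fun_upd_in_PiE_lessThan_Suc:
  "x \<in> {..<n} \<rightarrow>\<^sub>E M \<Longrightarrow> a \<in> M \<Longrightarrow> x(n := a) \<in> {..<Suc n} \<rightarrow>\<^sub>E M"
  by (auto simp: PiE_def extensional_def Pi_def less_Suc_eq)

lemma bounded_differences_average_coord:
  assumes "finite M" "M \<noteq> {}" "bounded_differences (Suc n) M d f"
  shows "bounded_differences n M d (average_coord n M f)"
  unfolding bounded_differences_def
proof (intro ballI allI impI)
  fix x i a
  assume x: "x \<in> {..<n} \<rightarrow>\<^sub>E M" and i: "i < n" and a: "a \<in> M"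
  have "\<bar>f (x(n := b)) - f ((x(n := b))(i := a))\<bar> \<le> d" if "b \<in> M" for b
    using assms(3) fun_upd_in_PiE_lessThan_Suc[OF x that] i a
    unfolding bounded_differences_def by simp
  then have "\<bar>(\<Sum>b\<in>M. f (x(n := b)) - f ((x(i := a))(n := b))) / card M - 0\<bar> \<le> d"
    using i by (intro abs_average_diff_le assms(1,2)) (simp add: fun_upd_twist)
  then show "\<bar>average_coord n M f x - average_coord n M f (x(i := a))\<bar> \<le> d"
    by (simp add: average_coord_def sum_subtractf diff_divide_distrib)
qed

lemma abs_average_coord_diff_le:
  assumes "finite M" "M \<noteq> {}" "bounded_differences (Suc n) M d f"
    and "x \<in> {..<n} \<rightarrow>\<^sub>E M" "a \<in> M"
  shows "\<bar>average_coord n M f x - f (x(n := a))\<bar> \<le> d"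
proof -
  have "\<bar>f ((x(n := a))(n := b)) - f (x(n := a))\<bar> \<le> d" if "b \<in> M" for b
    using assms(3) fun_upd_in_PiE_lessThan_Suc[OF assms(4,5)] that
    unfolding bounded_differences_def by (metis abs_minus_commute fun_upd_upd lessI)
  then show ?thesis
    unfolding average_coord_def using abs_average_diff_le[OF assms(1,2)] by simp
qed

lemma mean_average_coord:
  assumes "finite M"
  shows "(\<Sum>x\<in>{..<n} \<rightarrow>\<^sub>E M. average_coord n M f x) / card M ^ n
       = (\<Sum>x\<in>{..<Suc n} \<rightarrow>\<^sub>E M. f x) / card M ^ Suc n"
  by (simp add: sum_PiE_lessThan_Suc[OF assms] average_coord_def sum_divide_distrib[symmetric] mult.commute)

lemma sum_exp_bounded_differences:
  assumes M: "finite M" "M \<noteq> {}" and l: "0 \<le> l" "l * d \<le> 1"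
    and "bounded_differences n M d f"
  shows "(\<Sum>x\<in>{..<n} \<rightarrow>\<^sub>E M. exp (l * ((\<Sum>z\<in>{..<n} \<rightarrow>\<^sub>E M. f z) / card M ^ n - f x)))
           \<le> card M ^ n * exp (n * l\<^sup>2 * d\<^sup>2)"
  using assms(5)
proof (induction n arbitrary: f)
  case 0
  then show ?case by simp
next
  case (Suc n)
  define g where "g = average_coord n M f"
  define mean where "mean = (\<Sum>z\<in>{..<n} \<rightarrow>\<^sub>E M. g z) / card M ^ n"
  have mean_Suc: "(\<Sum>z\<in>{..<Suc n} \<rightarrow>\<^sub>E M. f z) / card M ^ Suc n = mean"
    unfolding mean_def g_def by (rule mean_average_coord[OF M(1), symmetric])
  have IH: "(\<Sum>x\<in>{..<n} \<rightarrow>\<^sub>E M. exp (l * (mean - g x))) \<le> card M ^ n * exp (n * l\<^sup>2 * d\<^sup>2)"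
    unfolding mean_def g_def by (rule Suc.IH[OF bounded_differences_average_coord[OF M Suc.prems]])
  have last_coord: "(\<Sum>a\<in>M. exp (l * (g x - f (x(n := a))))) \<le> card M * exp (l\<^sup>2 * d\<^sup>2)"
    if x: "x \<in> {..<n} \<rightarrow>\<^sub>E M" for x
  proof (rule sum_exp_centred_le[OF M(1) _ _ l])
    show "(\<Sum>a\<in>M. g x - f (x(n := a))) = 0"
      using M by (simp add: sum_subtractf g_def average_coord_def)
    show "\<bar>g x - f (x(n := a))\<bar> \<le> d" if "a \<in> M" for a
      unfolding g_def by (rule abs_average_coord_diff_le[OF M Suc.prems x that])
  qed
  \<comment> \<open>\<open>mean - f = (mean - g) + (g - f)\<close>, and the second summand is centred in the last coordinate.\<close>
  have "(\<Sum>x\<in>{..<Suc n} \<rightarrow>\<^sub>E M. exp (l * (mean - f x)))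
      = (\<Sum>x\<in>{..<n} \<rightarrow>\<^sub>E M. exp (l * (mean - g x)) * (\<Sum>a\<in>M. exp (l * (g x - f (x(n := a))))))"
    by (simp add: sum_PiE_lessThan_Suc[OF M(1)] sum_distrib_left exp_add[symmetric] algebra_simps)
  also have "\<dots> \<le> (\<Sum>x\<in>{..<n} \<rightarrow>\<^sub>E M. exp (l * (mean - g x)) * (card M * exp (l\<^sup>2 * d\<^sup>2)))"
    by (intro sum_mono mult_left_mono last_coord) auto
  also have "\<dots> \<le> card M ^ n * exp (n * l\<^sup>2 * d\<^sup>2) * (card M * exp (l\<^sup>2 * d\<^sup>2))"
    by (simp only: sum_distrib_right[symmetric]) (intro mult_right_mono IH; simp)
  also have "\<dots> = card M ^ Suc n * exp (Suc n * l\<^sup>2 * d\<^sup>2)"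
    by (simp add: algebra_simps exp_add[symmetric])
  finally show ?case by (simp only: mean_Suc)
qed

lemma prob_lower_tail_bounded_differences:
  assumes M: "finite M" "M \<noteq> {}" and "0 < d" "0 < n" and bd: "bounded_differences n M d f"
    and t: "0 \<le> t" "t \<le> 2 * real n * d"
  defines "p \<equiv> pmf_of_set ({..<n} \<rightarrow>\<^sub>E M)"
  shows "measure_pmf.prob p {x. f x \<le> measure_pmf.expectation p f - t} \<le> exp (- t\<^sup>2 / (4 * real n * d\<^sup>2))"
proof -
  define P where "P = {..<n} \<rightarrow>\<^sub>E M"
  define mean where "mean = (\<Sum>z\<in>P. f z) / card M ^ n"
  define S where "S = {x\<in>P. f x \<le> mean - t}"
  define l where "l = t / (2 * real n * d\<^sup>2)"
  have P: "finite P" "P \<noteq> {}" "card P = card M ^ n" "0 < real (card M) ^ n"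
    using M by (auto simp: P_def finite_PiE card_PiE card_gt_0_iff PiE_eq_empty_iff)
  have l: "0 \<le> l" "l * d \<le> 1"
    using assms(3,4) t by (auto simp: l_def power2_eq_square field_simps)
  have "card S * exp (l * t) = (\<Sum>x\<in>S. exp (l * t))" by simp
  also have "\<dots> \<le> (\<Sum>x\<in>S. exp (l * (mean - f x)))"
    using l by (intro sum_mono) (auto simp: S_def intro!: mult_left_mono)
  also have "\<dots> \<le> (\<Sum>x\<in>P. exp (l * (mean - f x)))"
    using P by (intro sum_mono2) (auto simp: S_def)
  also have "\<dots> \<le> card P * exp (n * l\<^sup>2 * d\<^sup>2)"
    using sum_exp_bounded_differences[OF M l bd] P by (simp add: P_def mean_def)
  finally have "card S / card P \<le> exp (n * l\<^sup>2 * d\<^sup>2 - l * t)"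
    using P by (simp add: exp_diff pos_divide_le_eq pos_le_divide_eq mult.commute)
  also have "n * l\<^sup>2 * d\<^sup>2 - l * t = - t\<^sup>2 / (4 * real n * d\<^sup>2)"
    using assms(3,4) by (simp add: l_def field_simps power2_eq_square)
  also have "card S / card P = measure_pmf.prob p {x. f x \<le> mean - t}"
    using P by (simp add: p_def P_def[symmetric] measure_pmf_of_set S_def Int_def)
  also have "mean = measure_pmf.expectation p f"
    using P by (simp add: p_def P_def[symmetric] integral_pmf_of_set mean_def)
  finally show ?thesis .
qed

lemma singleton_bins_le_fun_upd:
  "singleton_bins n m x \<le> singleton_bins n m (x(i := a)) + 2"
proof -
  let ?single = "\<lambda>y. {j \<in> {..<m}. card {k \<in> {..<n}. y k = j} = 1}"
  have unchanged: "{k \<in> {..<n}. x k = j} = {k \<in> {..<n}. (x(i := a)) k = j}"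
    if "j \<noteq> x i" "j \<noteq> a" for j
    using that by auto
  have "?single x \<subseteq> ?single (x(i := a)) \<union> {x i, a}"
  proof
    fix j
    assume "j \<in> ?single x"
    then show "j \<in> ?single (x(i := a)) \<union> {x i, a}"
      using unchanged[of j] by (cases "j \<in> {x i, a}") (auto simp del: fun_upd_apply)
  qed
  then have "card (?single x) \<le> card (?single (x(i := a)) \<union> {x i, a})"
    by (intro card_mono) auto
  also have "\<dots> \<le> card (?single (x(i := a))) + card {x i, a}"
    by (rule card_Un_le)
  also have "card {x i, a} \<le> 2"
    by (simp add: card_insert_le_m1)
  finally show ?thesis by (simp add: singleton_bins_def)
qed

lemma bounded_differences_singleton_bins:
  "bounded_differences n M 2 (\<lambda>f. real (singleton_bins n m f))"
  unfolding bounded_differences_def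
proof (intro ballI allI impI)
  fix x i a
  have "singleton_bins n m (x(i := a)) \<le> singleton_bins n m ((x(i := a))(i := x i)) + 2"
    by (rule singleton_bins_le_fun_upd)
  then show "\<bar>real (singleton_bins n m x) - real (singleton_bins n m (x(i := a)))\<bar> \<le> 2"
    using singleton_bins_le_fun_upd[of n m x i a] by simp
qed

lemma card_single_ball_in_bin:
  assumes "j < m"
  shows "card {f \<in> {..<n} \<rightarrow>\<^sub>E {..<m}. card {k \<in> {..<n}. f k = j} = 1} = n * (m - 1) ^ (n - 1)"
proof -
  define Q where "Q i = PiE {..<n} (\<lambda>k. if k = i then {j} else {..<m} - {j})" for i
  have "{f \<in> {..<n} \<rightarrow>\<^sub>E {..<m}. card {k \<in> {..<n}. f k = j} = 1} = (\<Union>i<n. Q i)"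
  proof (intro equalityI subsetI)
    fix f
    assume "f \<in> {f \<in> {..<n} \<rightarrow>\<^sub>E {..<m}. card {k \<in> {..<n}. f k = j} = 1}"
    then obtain i where f: "f \<in> {..<n} \<rightarrow>\<^sub>E {..<m}" and i: "{k \<in> {..<n}. f k = j} = {i}"
      by (auto simp: card_Suc_eq)
    then have "f \<in> Q i" "i < n"
      by (auto simp: Q_def PiE_def Pi_def)
    then show "f \<in> (\<Union>i<n. Q i)" by auto
  next
    fix f
    assume "f \<in> (\<Union>i<n. Q i)"
    then obtain i where "i < n" "f \<in> Q i" by auto
    then have "{k \<in> {..<n}. f k = j} = {i}" "f \<in> {..<n} \<rightarrow>\<^sub>E {..<m}"
      using assms by (auto simp: Q_def PiE_def Pi_def split: if_splits)
    then show "f \<in> {f \<in> {..<n} \<rightarrow>\<^sub>E {..<m}. card {k \<in> {..<n}. f k = j} = 1}" by simp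
  qed
  moreover have "card (\<Union>i<n. Q i) = (\<Sum>i<n. card (Q i))"
  proof (rule card_UN_disjoint)
    show "\<forall>i\<in>{..<n}. \<forall>k\<in>{..<n}. i \<noteq> k \<longrightarrow> Q i \<inter> Q k = {}"
      by (auto simp: Q_def PiE_def Pi_def)
  qed (simp_all add: Q_def finite_PiE)
  moreover have "card (Q i) = (m - 1) ^ (n - 1)" if "i < n" for i
  proof -
    have "card (Q i) = (\<Prod>k<n. if k = i then 1 else m - 1)"
      using assms by (simp add: Q_def card_PiE if_distrib cong: if_cong)
    also have "\<dots> = (m - 1) ^ (n - 1)"
      using that by (simp add: prod.If_cases Diff_eq[symmetric])
    finally show ?thesis .
  qed
  ultimately show ?thesis by simp
qed

lemma expectation_singleton_bins:
  assumes "0 < m"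
  shows "measure_pmf.expectation (balls_into_bins n m) (\<lambda>f. real (singleton_bins n m f))
           = n * (1 - 1 / m) ^ (n - 1)"
proof -
  let ?P = "{..<n} \<rightarrow>\<^sub>E {..<m}"
  have P: "finite ?P" "?P \<noteq> {}" "card ?P = m ^ n"
    using assms by (auto simp: finite_PiE card_PiE PiE_eq_empty_iff)
  have "(\<Sum>f\<in>?P. real (singleton_bins n m f))
      = (\<Sum>f\<in>?P. \<Sum>j<m. if card {k \<in> {..<n}. f k = j} = 1 then 1 else 0)"
    by (simp add: singleton_bins_def sum.If_cases Int_def)
  also have "\<dots> = (\<Sum>j<m. \<Sum>f\<in>?P. if card {k \<in> {..<n}. f k = j} = 1 then 1 else 0)"
    by (rule sum.swap)
  also have "\<dots> = (\<Sum>j<m. real (n * (m - 1) ^ (n - 1)))"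
  proof (rule sum.cong[OF refl])
    fix j
    assume "j \<in> {..<m}"
    then show "(\<Sum>f\<in>?P. if card {k \<in> {..<n}. f k = j} = 1 then 1 else 0) = real (n * (m - 1) ^ (n - 1))"
      using sum.inter_filter[OF P(1), of "\<lambda>_. 1 :: real", symmetric] card_single_ball_in_bin[of j m n]
      by simp
  qed
  also have "\<dots> = m * (n * (real m - 1) ^ (n - 1))"
    using assms by simp
  finally show ?thesis
    using assms P by (cases n) (simp_all add: balls_into_bins_def integral_pmf_of_set field_simps)
qed

lemma prob_singleton_bins_gt:
  assumes "0 < n" "0 < m" "0 \<le> t" "t \<le> 4 * real n"
  shows "1 - exp (- t\<^sup>2 / (16 * real n))
           \<le> measure_pmf.prob (balls_into_bins n m) {f. n * (1 - 1 / m) ^ (n - 1) - t < singleton_bins n m f}"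
proof -
  let ?p = "balls_into_bins n m" and ?X = "\<lambda>f. real (singleton_bins n m f)"
  have "measure_pmf.prob ?p {f. ?X f \<le> measure_pmf.expectation ?p ?X - t} \<le> exp (- t\<^sup>2 / (4 * real n * 2\<^sup>2))"
    unfolding balls_into_bins_def
    using assms by (intro prob_lower_tail_bounded_differences bounded_differences_singleton_bins) auto
  then have "measure_pmf.prob ?p (- {f. n * (1 - 1 / m) ^ (n - 1) - t < ?X f}) \<le> exp (- t\<^sup>2 / (16 * real n))"
    using assms(2) by (simp add: expectation_singleton_bins not_less Compl_eq)
  then show ?thesis
    using measure_pmf.prob_compl[of "{f. n * (1 - 1 / m) ^ (n - 1) - t < ?X f}" ?p]
    by (simp add: Compl_eq_Diff_UNIV)
qed

lemma exp_le_one_minus_inverse_power: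
  fixes x :: real
  assumes "1 < x"
  shows "exp (- n / (x - 1)) \<le> (1 - 1 / x) ^ n"
proof -
  have "- (1 / (x - 1)) \<le> - ln (1 + 1 / (x - 1))"
    using ln_add_one_self_le_self[of "1 / (x - 1)"] assms by simp
  also have "- ln (1 + 1 / (x - 1)) = ln (1 - 1 / x)"
    using assms by (simp add: field_simps ln_div)
  finally have "exp (n * - (1 / (x - 1))) \<le> exp (n * ln (1 - 1 / x))"
    by (intro exp_mono mult_left_mono) auto
  also have "\<dots> = (1 - 1 / x) ^ n"
    using assms by (simp add: exp_of_nat_mult)
  finally show ?thesis by simp
qed

lemma half_powr_le_mean_singleton_bins:
  assumes "0 < \<beta>" "1 < n" "1 < real m" "real n / (real m - 1) \<le> ln (real n) / \<beta> + ln 2"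
  shows "real n powr (1 - 1 / \<beta>) / 2 \<le> real n * (1 - 1 / real m) ^ (n - 1)"
proof -
  have "real n powr (1 - 1 / \<beta>) / 2 = real n * exp (- (ln (real n) / \<beta> + ln 2))"
    using assms(2) by (simp add: powr_def exp_diff exp_minus field_simps)
  also have "\<dots> \<le> real n * exp (- real n / (real m - 1))"
    using assms(4) by (intro mult_left_mono) auto
  also have "\<dots> \<le> real n * (1 - 1 / real m) ^ n"
    using exp_le_one_minus_inverse_power[OF assms(3)] by (intro mult_left_mono) auto
  also have "\<dots> \<le> real n * (1 - 1 / real m) ^ (n - 1)"
    using assms(3) by (intro mult_left_mono power_decreasing) auto
  finally show ?thesis .
qed

lemma prob_singleton_bins_ge_powr:
  fixes \<beta> :: real and n m :: nat
  defines "A \<equiv> real n powr (1 - 1 / \<beta>)"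
  assumes "0 < \<beta>" "1 \<le> ln (real n)" "A / 4 \<le> 4 * real n" "1 < real m"
    and "real n / (real m - 1) \<le> ln (real n) / \<beta> + ln 2"
  shows "1 - exp (- (A / 4)\<^sup>2 / (16 * real n))
           \<le> measure_pmf.prob (balls_into_bins n m) {f. A / (4 * ln (real n)) \<le> singleton_bins n m f}"
proof -
  have "1 < n"
    using assms(3) by (cases "n \<le> 1") (auto simp: le_Suc_eq)
  have "A / (4 * ln (real n)) \<le> A / 4"
    using assms(3) by (intro divide_left_mono) (auto simp: A_def)
  also have "\<dots> \<le> real n * (1 - 1 / real m) ^ (n - 1) - A / 4"
    using half_powr_le_mean_singleton_bins[OF assms(2) \<open>1 < n\<close> assms(5,6)] by (simp add: A_def)
  finally have threshold: "A / (4 * ln (real n)) \<le> real n * (1 - 1 / real m) ^ (n - 1) - A / 4" .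
  have "1 - exp (- (A / 4)\<^sup>2 / (16 * real n)) \<le> measure_pmf.prob (balls_into_bins n m)
      {f. real n * (1 - 1 / real m) ^ (n - 1) - A / 4 < singleton_bins n m f}"
    using \<open>1 < n\<close> assms(4,5) by (intro prob_singleton_bins_gt) (auto simp: A_def)
  also have "\<dots> \<le> measure_pmf.prob (balls_into_bins n m) {f. A / (4 * ln (real n)) \<le> singleton_bins n m f}"
    using threshold by (intro measure_pmf.finite_measure_mono) auto
  finally show ?thesis .
qed

theorem lemma2p3:
  fixes \<beta> c :: real
  assumes "\<beta> \<ge> 4" and "c > 0"
  shows "\<exists>N::nat. \<forall>n m. n \<ge> N \<longrightarrow> real m = \<beta> * real n / ln (real n) \<longrightarrow>
           measure_pmf.prob (balls_into_bins n m)
             {f. real (singleton_bins n m f) \<ge> real n powr (1 - 1 / \<beta>) / (4 * ln (real n))}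
           \<ge> 1 - real n powr (- c)"
proof -
  let ?A = "\<lambda>n. real n powr (1 - 1 / \<beta>)"
  let ?large = "\<lambda>n. 1 < \<beta> * real n / ln (real n)
    \<and> real n / (\<beta> * real n / ln (real n) - 1) \<le> ln (real n) / \<beta> + ln 2
    \<and> 1 \<le> ln (real n) \<and> ?A n / 4 \<le> 4 * real n
    \<and> exp (- (?A n / 4)\<^sup>2 / (16 * real n)) \<le> real n powr - c"
  \<comment> \<open>\<open>real_asymp\<close> needs the sign of the exponent \<open>1 - 2 / \<beta>\<close> of the last condition explicitly.\<close>
  have \<beta>: "0 < \<beta>" "0 < 1 - 2 / \<beta>"
    using assms(1) by (auto simp: field_simps)
  have "eventually ?large sequentially"
    using \<beta> assms(2) by (intro eventually_conj; real_asymp)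
  then obtain N where N: "\<And>n. N \<le> n \<Longrightarrow> ?large n"
    unfolding eventually_sequentially by blast
  show ?thesis
  proof (intro exI allI impI)
    fix n m
    assume "N \<le> n" and m: "real m = \<beta> * real n / ln (real n)"
    then have large: "?large n" by (intro N)
    then have "1 - exp (- (?A n / 4)\<^sup>2 / (16 * real n))
        \<le> measure_pmf.prob (balls_into_bins n m) {f. ?A n / (4 * ln (real n)) \<le> singleton_bins n m f}"
      unfolding m[symmetric] by (intro prob_singleton_bins_ge_powr \<beta>(1)) auto
    with large show "1 - real n powr - c
        \<le> measure_pmf.prob (balls_into_bins n m) {f. ?A n / (4 * ln (real n)) \<le> singleton_bins n m f}"
      by linarith
  qed
qed

end
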